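(* Let $(X,d)$ be a $K$-doubling metric space ($K\ge2$). Let $\mathcal F_1\subset\mathrm{Lip}(X,\mathbb{R})$ and $\mathcal F\subset\mathrm{Lip}(X,\mathbb{R}^D)$ be function spaces such that: (1) $(\mathcal F_1,\|\cdot\|_{\mathcal F_1})$ and $(\mathcal F,\|\cdot\|_{\mathcal F})$ are normed linear spaces; (2) $\|f\|_{\mathrm{Lip}}\lesssim\|f\|_{\mathcal F_1}$ for all $f\in\mathcal F_1$ and $\|v\|_{\mathrm{Lip}}\lesssim\|v\|_{\mathcal F}$ for all $v\in\mathcal F$; (3) for $f\in\mathcal F_1$ and $v,w\in\mathcal F$: $fv\in\mathcal F$ with $\|fv\|_{\mathcal F}\lesssim\|f\|_{\mathcal F_1}\|v\|_{\mathcal F}$, and $v\cdot w\in\mathcal F_1$ with $\|v\cdot w\|_{\mathcal F_1}\lesssim\|v\|_{\mathcal F}\|w\|_{\mathcal F}$; if $f\in\mathcal F_1$ and $f\ge c>0$ on $X$ then $1/f\in\mathcal F_1$ with $\|1/f\|_{\mathcal F_1}\lesssim_c\|f\|_{\mathcal F_1}$; if $v\in\mathcal F$ and $|v|\ge c>0$ on $X$ then $|v|\in\mathcal F_1$ with $\||v|\|_{\mathcal F_1}\lesssim_c\|v\|_{\mathcal F}$; (4) for every $\delta>0$ and $w\in\mathrm{Lip}(X,\mathbb{R}^D)$ with $\|w\|_{\mathrm{Lip}}\le1$ there exists $v\in\mathcal F$ with $\|v-w\|_{L^\infty}<\delta$ and $\|v\|_{\mathcal F}\lesssim_\delta\|w\|_{L^\infty}+\|w\|_{\mathrm{Lip}}$.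 Let $1\le m\le D-224K^4\log K$. If $v_1,\dots,v_m:X\to\mathbb{S}^{D-1}$ satisfy $\|v_i\|_{\mathcal F}\le1$ and $v_1(p),\dots,v_m(p)$ are orthonormal for every $p\in X$, then there exists $v_{m+1}:X\to\mathbb{S}^{D-1}$ with $\|v_{m+1}\|_{\mathcal F}\lesssim_{K,m,\mathcal F}1$ such that $v_1(p),\dots,v_{m+1}(p)$ are orthonormal for every $p\in X$.
   Context: $(X,d)$ is $K$-doubling if every ball of radius $R$ is covered by $K$ balls of radius $R/2$. $\mathrm{Lip}(X,\mathbb{R}^D)$ is the space of Lipschitz maps $X\to\mathbb{R}^D$, with $\|f\|_{\mathrm{Lip}}=\sup_{x\ne y}|f(x)-f(y)|/d(x,y)$ and $\|f\|_{L^\infty}=\sup_X|f|$. Implied constants in the hypotheses are fixed constants; the conclusion's constant depends on $K$, $m$, and those constants of $\mathcal F,\mathcal F_1$. *)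

theory Defs
  imports "HOL-Analysis.Analysis"
begin

text \<open>Euclidean space R^D, represented as real sequences vanishing from index D on
  (so that the dimension D can be quantified inside a formula).\<close>

definition RD :: "nat \<Rightarrow> (nat \<Rightarrow> real) set" where
  "RD D = {x. \<forall>i\<ge>D. x i = 0}"

definition vinner :: "nat \<Rightarrow> (nat \<Rightarrow> real) \<Rightarrow> (nat \<Rightarrow> real) \<Rightarrow> real" where
  "vinner D x y = (\<Sum>i<D. x i * y i)"

definition vnorm :: "nat \<Rightarrow> (nat \<Rightarrow> real) \<Rightarrow> real" where
  "vnorm D x = sqrt (vinner D x x)"

definition doubling :: "'a::metric_space set \<Rightarrow> nat \<Rightarrow> bool" where
  "doubling X K \<longleftrightarrow>
     (\<forall>x\<in>X. \<forall>R>0. \<exists>S. S \<subseteq> X \<and> finite S \<and> card S \<le> K \<and>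
        X \<inter> ball x R \<subseteq> (\<Union>s\<in>S. ball s (R/2)))"

definition lipqR :: "'a::metric_space set \<Rightarrow> ('a \<Rightarrow> real) \<Rightarrow> real set" where
  "lipqR X f = {\<bar>f x - f y\<bar> / dist x y | x y. x \<in> X \<and> y \<in> X \<and> x \<noteq> y}"

definition lipschitzR :: "'a::metric_space set \<Rightarrow> ('a \<Rightarrow> real) \<Rightarrow> bool" where
  "lipschitzR X f \<longleftrightarrow> bdd_above (lipqR X f)"

definition lipnormR :: "'a::metric_space set \<Rightarrow> ('a \<Rightarrow> real) \<Rightarrow> real" where
  "lipnormR X f = Sup (insert 0 (lipqR X f))"

definition lipqV :: "nat \<Rightarrow> 'a::metric_space set \<Rightarrow> ('a \<Rightarrow> nat \<Rightarrow> real) \<Rightarrow> real set" where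
  "lipqV D X f = {vnorm D (\<lambda>i. f x i - f y i) / dist x y | x y. x \<in> X \<and> y \<in> X \<and> x \<noteq> y}"

definition lipschitzV :: "nat \<Rightarrow> 'a::metric_space set \<Rightarrow> ('a \<Rightarrow> nat \<Rightarrow> real) \<Rightarrow> bool" where
  "lipschitzV D X f \<longleftrightarrow> bdd_above (lipqV D X f)"

definition lipnormV :: "nat \<Rightarrow> 'a::metric_space set \<Rightarrow> ('a \<Rightarrow> nat \<Rightarrow> real) \<Rightarrow> real" where
  "lipnormV D X f = Sup (insert 0 (lipqV D X f))"

definition boundedV :: "nat \<Rightarrow> 'a set \<Rightarrow> ('a \<Rightarrow> nat \<Rightarrow> real) \<Rightarrow> bool" where
  "boundedV D X f \<longleftrightarrow> bdd_above ((\<lambda>x. vnorm D (f x)) ` X)"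

definition linfV :: "nat \<Rightarrow> 'a set \<Rightarrow> ('a \<Rightarrow> nat \<Rightarrow> real) \<Rightarrow> real" where
  "linfV D X f = Sup (insert 0 ((\<lambda>x. vnorm D (f x)) ` X))"

text \<open>Lip(X,R) and Lip(X,R^D): Lipschitz maps on X (extended by 0 outside X, so that
  maps on X correspond to unique HOL functions).\<close>

definition LipR :: "'a::metric_space set \<Rightarrow> ('a \<Rightarrow> real) set" where
  "LipR X = {f. lipschitzR X f \<and> (\<forall>x. x \<notin> X \<longrightarrow> f x = 0)}"

definition LipV :: "nat \<Rightarrow> 'a::metric_space set \<Rightarrow> ('a \<Rightarrow> nat \<Rightarrow> real) set" where
  "LipV D X = {f. lipschitzV D X f \<and> (\<forall>x\<in>X. f x \<in> RD D) \<and>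
                  (\<forall>x. x \<notin> X \<longrightarrow> f x = (\<lambda>i. 0))}"

definition normed_lin_space ::
  "'f \<Rightarrow> ('f \<Rightarrow> 'f \<Rightarrow> 'f) \<Rightarrow> (real \<Rightarrow> 'f \<Rightarrow> 'f) \<Rightarrow> 'f set \<Rightarrow> ('f \<Rightarrow> real) \<Rightarrow> bool" where
  "normed_lin_space z add sc F N \<longleftrightarrow>
     z \<in> F \<and> (\<forall>f\<in>F. \<forall>g\<in>F. add f g \<in> F) \<and> (\<forall>a. \<forall>f\<in>F. sc a f \<in> F) \<and>
     (\<forall>f\<in>F. 0 \<le> N f) \<and> (\<forall>f\<in>F. N f = 0 \<longleftrightarrow> f = z) \<and>
     (\<forall>a. \<forall>f\<in>F. N (sc a f) = \<bar>a\<bar> * N f) \<and>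
     (\<forall>f\<in>F. \<forall>g\<in>F. N (add f g) \<le> N f + N g)"

definition normed_fs_R :: "('a \<Rightarrow> real) set \<Rightarrow> (('a \<Rightarrow> real) \<Rightarrow> real) \<Rightarrow> bool" where
  "normed_fs_R F N \<longleftrightarrow>
     normed_lin_space (\<lambda>x. 0) (\<lambda>f g x. f x + g x) (\<lambda>a f x. a * f x) F N"

definition normed_fs_V :: "('a \<Rightarrow> nat \<Rightarrow> real) set \<Rightarrow> (('a \<Rightarrow> nat \<Rightarrow> real) \<Rightarrow> real) \<Rightarrow> bool" where
  "normed_fs_V F N \<longleftrightarrow>
     normed_lin_space (\<lambda>x i. 0) (\<lambda>f g x i. f x i + g x i) (\<lambda>a f x i. a * f x i) F N"

end

theory Submission
  imports Defs
begin

(* Take an r-net Y of X, with r small against the Lipschitz constants of the v_i. By doubling,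
   a ball of radius 2r meets at most K^2 net points and a ball of radius 4r at most K^3, so as
   D >= m + K^3 one can choose (by Zorn's lemma) unit vectors e_y orthogonal to v_1(y), ..., v_m(y)
   and to the e_y' of all other net points y' within 4r. Gluing the e_y with tents of radius 2r
   gives a Lipschitz field w with |w| >= 1/2 that is almost orthogonal to the v_i. An approximation
   of w in F, with the v_i-components removed and then normalised using the algebra properties
   of F and F1, is the required v_(m+1). *)

section \<open>Vectors in \<open>RD D\<close>\<close>

lemma vnorm_eq_L2_set: "vnorm D x = L2_set x {..<D}"
  by (simp add: vnorm_def vinner_def L2_set_def power2_eq_square)

lemma vnorm_nonneg [simp]: "0 \<le> vnorm D x"
  by (simp add: vnorm_eq_L2_set)

lemma vnorm_zero [simp]: "vnorm D (\<lambda>i. 0) = 0"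
  by (simp add: vnorm_def vinner_def)

lemma vnorm_power2: "(vnorm D x)\<^sup>2 = vinner D x x"
  unfolding vnorm_def vinner_def by (simp add: sum_nonneg)

lemma vinner_commute: "vinner D x y = vinner D y x"
  by (simp add: vinner_def mult.commute)

lemma vinner_scale_right: "vinner D x (\<lambda>i. c * y i) = c * vinner D x y"
  unfolding vinner_def by (simp add: algebra_simps sum_distrib_left)

lemma vinner_diff_right: "vinner D x (\<lambda>i. y i - z i) = vinner D x y - vinner D x z"
  unfolding vinner_def by (simp add: algebra_simps sum_subtractf)

lemma vinner_diff_left: "vinner D (\<lambda>i. y i - z i) x = vinner D y x - vinner D z x"
  by (metis vinner_commute vinner_diff_right)

lemma vinner_sum_right:
  "vinner D x (\<lambda>i. \<Sum>j\<in>S. c j * a j i) = (\<Sum>j\<in>S. c j * vinner D x (a j))"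
  unfolding vinner_def sum_distrib_left
  by (subst sum.swap) (simp add: sum_distrib_left mult.left_commute)

lemma vnorm_scale: "vnorm D (\<lambda>i. c * x i) = \<bar>c\<bar> * vnorm D x"
proof -
  have "vinner D (\<lambda>i. c * x i) (\<lambda>i. c * x i) = c\<^sup>2 * vinner D x x"
    by (simp add: vinner_scale_right vinner_commute[of D "\<lambda>i. c * x i"] power2_eq_square)
  then show ?thesis
    by (simp add: vnorm_def real_sqrt_mult)
qed

lemma vnorm_minus_commute: "vnorm D (\<lambda>i. x i - y i) = vnorm D (\<lambda>i. y i - x i)"
  using vnorm_scale[of D "-1" "\<lambda>i. x i - y i"] by simp

lemma vnorm_triangle_ineq: "vnorm D (\<lambda>i. x i + y i) \<le> vnorm D x + vnorm D y"
  by (simp add: vnorm_eq_L2_set L2_set_triangle_ineq)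

lemma vnorm_triangle_ineq2: "vnorm D x - vnorm D y \<le> vnorm D (\<lambda>i. x i - y i)"
  using vnorm_triangle_ineq[of D "\<lambda>i. x i - y i" y] by simp

lemma vnorm_sum_le:
  assumes "finite S"
  shows "vnorm D (\<lambda>i. \<Sum>j\<in>S. c j * a j i) \<le> (\<Sum>j\<in>S. \<bar>c j\<bar> * vnorm D (a j))"
  using assms
proof (induction S rule: finite_induct)
  case (insert j S)
  have "vnorm D (\<lambda>i. c j * a j i + (\<Sum>j\<in>S. c j * a j i))
          \<le> vnorm D (\<lambda>i. c j * a j i) + vnorm D (\<lambda>i. \<Sum>j\<in>S. c j * a j i)"
    by (rule vnorm_triangle_ineq)
  with insert show ?case
    by (simp add: vnorm_scale)
qed simp

lemma abs_vinner_le: "\<bar>vinner D x y\<bar> \<le> vnorm D x * vnorm D y"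
proof -
  have "\<bar>vinner D x y\<bar> \<le> (\<Sum>i<D. \<bar>x i\<bar> * \<bar>y i\<bar>)"
    unfolding vinner_def by (metis (no_types, lifting) abs_mult sum.cong sum_abs)
  also have "\<dots> \<le> vnorm D x * vnorm D y"
    unfolding vnorm_eq_L2_set by (rule L2_set_mult_ineq)
  finally show ?thesis .
qed

lemma homogeneous_system_nontrivial_solution:
  fixes bs :: "('i \<Rightarrow> 'a::field) list"
  assumes "finite I" "length bs < card I"
  shows "\<exists>x. (\<forall>i. i \<notin> I \<longrightarrow> x i = 0) \<and> (\<exists>i\<in>I. x i \<noteq> 0) \<and>
             (\<forall>b\<in>set bs. (\<Sum>i\<in>I. b i * x i) = 0)"
  using assms
proof (induction "length bs" arbitrary: bs I)
  case 0
  then obtain i0 where "i0 \<in> I"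
    by fastforce
  with 0 show ?case
    by (intro exI[of _ "\<lambda>i. if i = i0 then 1 else 0"]) auto
next
  case (Suc n)
  then obtain b bs' where bs: "bs = b # bs'" and n: "n = length bs'"
    by (cases bs) auto
  show ?case
  proof (cases "\<forall>i\<in>I. b i = 0")
    case True
    with Suc.hyps(1)[OF n] Suc.prems bs show ?thesis
      by fastforce
  next
    case False
    then obtain i0 where i0: "i0 \<in> I" "b i0 \<noteq> 0"
      by auto
    define I' where "I' = I - {i0}"
    define eliminate where "eliminate c = (\<lambda>i. c i - c i0 / b i0 * b i)" for c :: "'i \<Rightarrow> 'a"
    have "n < card I'"
      using Suc.prems i0 bs n by (simp add: I'_def)
    then obtain x' where x': "\<forall>i. i \<notin> I' \<longrightarrow> x' i = 0" "\<exists>i\<in>I'. x' i \<noteq> 0"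
        "\<forall>c\<in>set bs'. (\<Sum>i\<in>I'. eliminate c i * x' i) = 0"
      using Suc.hyps(1)[of "map eliminate bs'" I'] Suc.prems n by (auto simp: I'_def)
    define S where "S = (\<Sum>i\<in>I'. b i * x' i)"
    define x where "x = x'(i0 := - S / b i0)"
    have split: "(\<Sum>i\<in>I. c i * x i) = - c i0 / b i0 * S + (\<Sum>i\<in>I'. c i * x' i)" for c
    proof -
      have "(\<Sum>i\<in>I. c i * x i) = c i0 * x i0 + (\<Sum>i\<in>I'. c i * x i)"
        using Suc.prems(1) i0 by (simp add: I'_def sum.remove)
      also have "(\<Sum>i\<in>I'. c i * x i) = (\<Sum>i\<in>I'. c i * x' i)"
        by (rule sum.cong) (auto simp: x_def I'_def)
      finally show ?thesis
        by (simp add: x_def)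
    qed
    have "(\<Sum>i\<in>I. c i * x i) = 0" if "c \<in> set bs" for c
    proof (cases "c = b")
      case True
      then show ?thesis
        using split[of b] i0 by (simp add: S_def)
    next
      case False
      then have "(\<Sum>i\<in>I'. eliminate c i * x' i) = 0"
        using x'(3) that bs by auto
      moreover have "(\<Sum>i\<in>I'. eliminate c i * x' i) = (\<Sum>i\<in>I'. c i * x' i) - c i0 / b i0 * S"
        by (simp add: eliminate_def S_def left_diff_distrib sum_subtractf sum_distrib_left mult.assoc)
      ultimately show ?thesis
        using split[of c] by simp
    qed
    moreover have "\<forall>i. i \<notin> I \<longrightarrow> x i = 0" "\<exists>i\<in>I. x i \<noteq> 0"
      using x'(1,2) i0 by (auto simp: x_def I'_def)
    ultimately show ?thesis
      by blast
  qed
qed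

lemma exists_unit_orthogonal:
  assumes "finite A" "card A < D"
  obtains a where "a \<in> RD D" "vnorm D a = 1" "\<And>b. b \<in> A \<Longrightarrow> vinner D b a = 0"
proof -
  obtain bs where bs: "set bs = A" "distinct bs"
    using finite_distinct_list[OF assms(1)] by auto
  then have "length bs < card {..<D}"
    using assms(2) distinct_card by fastforce
  then obtain x where x: "\<forall>i. i \<notin> {..<D} \<longrightarrow> x i = 0" "\<exists>i\<in>{..<D}. x i \<noteq> 0"
      "\<forall>b\<in>A. vinner D b x = 0"
    using homogeneous_system_nontrivial_solution[of "{..<D}" bs] bs by (auto simp: vinner_def)
  have "vnorm D x \<noteq> 0"
    using x(2) by (simp add: vnorm_eq_L2_set L2_set_eq_0_iff)
  define a where "a = (\<lambda>i. (1 / vnorm D x) * x i)"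
  have "vnorm D a = 1"
    using \<open>vnorm D x \<noteq> 0\<close> vnorm_nonneg[of D x] unfolding a_def vnorm_scale by simp
  moreover have "vinner D b a = 0" if "b \<in> A" for b
    using x(3) that unfolding a_def vinner_scale_right by simp
  moreover have "a \<in> RD D"
    using x(1) by (simp add: a_def RD_def)
  ultimately show ?thesis
    using that by blast
qed

definition proj_off :: "nat \<Rightarrow> nat \<Rightarrow> (nat \<Rightarrow> nat \<Rightarrow> real) \<Rightarrow> (nat \<Rightarrow> real) \<Rightarrow> nat \<Rightarrow> real" where
  "proj_off D m b a = (\<lambda>i. a i - (\<Sum>k\<in>{1..m}. vinner D a (b k) * b k i))"

lemma vinner_proj_off:
  assumes "\<And>j k. j \<in> {1..m} \<Longrightarrow> k \<in> {1..m} \<Longrightarrow> vinner D (b j) (b k) = (if j = k then 1 else 0)"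
    and "j \<in> {1..m}"
  shows "vinner D (b j) (proj_off D m b a) = 0"
proof -
  have "(\<Sum>k\<in>{1..m}. vinner D a (b k) * vinner D (b j) (b k))
          = (\<Sum>k\<in>{1..m}. if k = j then vinner D a (b k) else 0)"
    using assms by (intro sum.cong) auto
  also have "\<dots> = vinner D a (b j)"
    using assms(2) by simp
  finally show ?thesis
    unfolding proj_off_def vinner_diff_right vinner_sum_right by (simp add: vinner_commute)
qed

lemma vnorm_proj_off_ge:
  assumes "\<And>k. k \<in> {1..m} \<Longrightarrow> vnorm D (b k) = 1"
  shows "vnorm D a - (\<Sum>k\<in>{1..m}. \<bar>vinner D a (b k)\<bar>) \<le> vnorm D (proj_off D m b a)"
proof -
  have "vnorm D (\<lambda>i. \<Sum>k\<in>{1..m}. vinner D a (b k) * b k i) \<le> (\<Sum>k\<in>{1..m}. \<bar>vinner D a (b k)\<bar>)"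
    using vnorm_sum_le[of "{1..m}" D "\<lambda>k. vinner D a (b k)" b] assms by simp
  then show ?thesis
    using vnorm_triangle_ineq2[of D a "\<lambda>i. \<Sum>k\<in>{1..m}. vinner D a (b k) * b k i"]
    unfolding proj_off_def by linarith
qed

lemma vnorm_proj_off_near_ge:
  assumes unit: "\<And>k. k \<in> {1..m} \<Longrightarrow> vnorm D (b k) = 1"
    and almost_orth: "\<And>k. k \<in> {1..m} \<Longrightarrow> \<bar>vinner D (b k) w\<bar> \<le> \<eta>"
    and "1 / 2 \<le> vnorm D w" "vnorm D (\<lambda>i. a i - w i) \<le> \<eta>"
  shows "1 / 2 - (2 * real m + 1) * \<eta> \<le> vnorm D (proj_off D m b a)"
proof -
  have "\<bar>vinner D a (b k)\<bar> \<le> 2 * \<eta>" if k: "k \<in> {1..m}" for k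
  proof -
    have "vinner D a (b k) = vinner D (b k) w + vinner D (\<lambda>i. a i - w i) (b k)"
      by (simp add: vinner_diff_left vinner_commute)
    moreover have "\<bar>vinner D (\<lambda>i. a i - w i) (b k)\<bar> \<le> \<eta>"
      using abs_vinner_le[of D "\<lambda>i. a i - w i" "b k"] unit[OF k] assms(4) by simp
    ultimately show ?thesis
      using almost_orth[OF k] by linarith
  qed
  then have "(\<Sum>k\<in>{1..m}. \<bar>vinner D a (b k)\<bar>) \<le> m * (2 * \<eta>)"
    using sum_bounded_above[of "{1..m}" "\<lambda>k. \<bar>vinner D a (b k)\<bar>"] by simp
  moreover have "1 / 2 - \<eta> \<le> vnorm D a"
    using vnorm_triangle_ineq2[of D w a] vnorm_minus_commute[of D a w] assms(3,4) by linarith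
  ultimately show ?thesis
    using vnorm_proj_off_ge[of m D b a, OF unit] by (simp add: algebra_simps)
qed

section \<open>Doubling spaces, nets and locally orthogonal labellings\<close>

lemma doubling_cover_iterate:
  assumes "doubling X K" "x \<in> X" "R > 0"
  obtains S where "S \<subseteq> X" "finite S" "card S \<le> K ^ n"
    "X \<inter> ball x R \<subseteq> (\<Union>s\<in>S. ball s (R / 2 ^ n))"
proof -
  have "\<exists>S. S \<subseteq> X \<and> finite S \<and> card S \<le> K ^ n \<and> X \<inter> ball x R \<subseteq> (\<Union>s\<in>S. ball s (R / 2 ^ n))"
  proof (induction n)
    case 0
    show ?case
      using assms(2) by (intro exI[of _ "{x}"]) auto
  next
    case (Suc n)
    then obtain S where S: "S \<subseteq> X" "finite S" "card S \<le> K ^ n"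
        "X \<inter> ball x R \<subseteq> (\<Union>s\<in>S. ball s (R / 2 ^ n))"
      by blast
    have "\<exists>T. T \<subseteq> X \<and> finite T \<and> card T \<le> K \<and> X \<inter> ball s (R / 2 ^ n) \<subseteq> (\<Union>t\<in>T. ball t (R / 2 ^ n / 2))"
      if "s \<in> S" for s
    proof -
      have "s \<in> X" "R / 2 ^ n > 0"
        using S(1) that assms(3) by auto
      then show ?thesis
        using assms(1) unfolding doubling_def by blast
    qed
    then obtain T where T: "\<And>s. s \<in> S \<Longrightarrow> T s \<subseteq> X \<and> finite (T s) \<and> card (T s) \<le> K \<and>
        X \<inter> ball s (R / 2 ^ n) \<subseteq> (\<Union>t\<in>T s. ball t (R / 2 ^ n / 2))"
      by metis
    have "card (\<Union>s\<in>S. T s) \<le> (\<Sum>s\<in>S. card (T s))"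
      using S(2) by (rule card_UN_le)
    also have "\<dots> \<le> card S * K"
      using sum_mono[of S "\<lambda>s. card (T s)" "\<lambda>_. K"] T by simp
    also have "\<dots> \<le> K ^ Suc n"
      using S(3) by (simp add: mult.commute)
    finally have "card (\<Union>s\<in>S. T s) \<le> K ^ Suc n" .
    moreover have "X \<inter> ball x R \<subseteq> (\<Union>t\<in>(\<Union>s\<in>S. T s). ball t (R / 2 ^ Suc n))"
      using S(4) T by (fastforce simp: mult.commute)
    ultimately show ?case
      using S(2) T by (intro exI[of _ "\<Union>s\<in>S. T s"]) auto
  qed
  then show ?thesis
    using that by blast
qed

lemma doubling_separated_card_le:
  assumes "doubling X K" "x \<in> X" "R > 0" "A \<subseteq> X"
    and sep: "\<And>a b. a \<in> A \<Longrightarrow> b \<in> A \<Longrightarrow> a \<noteq> b \<Longrightarrow> r \<le> dist a b"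
    and "R / 2 ^ n \<le> r / 2"
  shows "finite (A \<inter> ball x R)" "card (A \<inter> ball x R) \<le> K ^ n"
proof -
  obtain S where S: "S \<subseteq> X" "finite S" "card S \<le> K ^ n"
      "X \<inter> ball x R \<subseteq> (\<Union>s\<in>S. ball s (R / 2 ^ n))"
    using doubling_cover_iterate[OF assms(1-3)] by blast
  define B where "B = A \<inter> ball x R"
  have "\<exists>s\<in>S. dist s a < R / 2 ^ n" if "a \<in> B" for a
    using S(4) assms(4) that unfolding B_def by fastforce
  then obtain centre where centre: "centre a \<in> S" "dist (centre a) a < R / 2 ^ n" if "a \<in> B" for a
    by metis
  have "inj_on centre B"
  proof (rule inj_onI, rule ccontr)
    fix a b
    assume ab: "a \<in> B" "b \<in> B" "centre a = centre b" "a \<noteq> b"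
    have "dist a b \<le> dist (centre a) a + dist (centre a) b"
      by (rule dist_triangle3)
    moreover have "r \<le> dist a b"
      using sep ab by (auto simp: B_def)
    moreover have "dist (centre a) b < R / 2 ^ n"
      using centre(2)[OF ab(2)] ab(3) by simp
    ultimately show False
      using centre(2)[OF ab(1)] assms(6) by linarith
  qed
  moreover have "centre ` B \<subseteq> S"
    using centre by auto
  ultimately have "finite B" "card B \<le> card S"
    using S(2) finite_subset finite_imageD card_image card_mono by metis+
  then show "finite (A \<inter> ball x R)" "card (A \<inter> ball x R) \<le> K ^ n"
    using S(3) unfolding B_def by auto
qed

lemma maximal_pairwise_subset:
  obtains M where "M \<subseteq> U" "pairwise R M" "\<And>x. x \<in> U \<Longrightarrow> pairwise R (insert x M) \<Longrightarrow> x \<in> M"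
proof -
  have "\<forall>\<C>\<in>chains {S. S \<subseteq> U \<and> pairwise R S}. \<Union>\<C> \<in> {S. S \<subseteq> U \<and> pairwise R S}"
  proof
    fix \<C>
    assume "\<C> \<in> chains {S. S \<subseteq> U \<and> pairwise R S}"
    then have "\<C> \<subseteq> {S. S \<subseteq> U \<and> pairwise R S}" "chain\<^sub>\<subseteq> \<C>"
      by (simp_all add: chains_def)
    then show "\<Union>\<C> \<in> {S. S \<subseteq> U \<and> pairwise R S}"
      using pairwise_chain_Union[of \<C> R] by blast
  qed
  from Zorn_Lemma[OF this] obtain M where M: "M \<subseteq> U" "pairwise R M"
      "\<And>Z. Z \<subseteq> U \<Longrightarrow> pairwise R Z \<Longrightarrow> M \<subseteq> Z \<Longrightarrow> Z = M"
    by (metis (no_types, lifting) mem_Collect_eq)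
  have "x \<in> M" if "x \<in> U" "pairwise R (insert x M)" for x
    using M(3)[of "insert x M"] M(1) that by blast
  with M(1,2) show ?thesis
    by (rule that)
qed

lemma separated_net_exists:
  assumes "r > 0"
  obtains Y where "Y \<subseteq> X" "\<And>a b. a \<in> Y \<Longrightarrow> b \<in> Y \<Longrightarrow> a \<noteq> b \<Longrightarrow> r \<le> dist a b"
    "\<And>p. p \<in> X \<Longrightarrow> \<exists>y\<in>Y. dist p y < r"
proof -
  obtain Y where Y: "Y \<subseteq> X" "pairwise (\<lambda>a b. r \<le> dist a b) Y"
      "\<And>p. p \<in> X \<Longrightarrow> pairwise (\<lambda>a b. r \<le> dist a b) (insert p Y) \<Longrightarrow> p \<in> Y"
    using maximal_pairwise_subset[of X "\<lambda>a b. r \<le> dist a b"] by blast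
  have covering: "\<exists>y\<in>Y. dist p y < r" if "p \<in> X" for p
  proof (rule ccontr)
    assume far: "\<not> (\<exists>y\<in>Y. dist p y < r)"
    then have "pairwise (\<lambda>a b. r \<le> dist a b) (insert p Y)"
      using Y(2) by (simp add: pairwise_insert not_less dist_commute[of _ p])
    then have "p \<in> Y"
      using Y(3) that by blast
    with far show False
      using assms by fastforce
  qed
  have separated: "r \<le> dist a b" if "a \<in> Y" "b \<in> Y" "a \<noteq> b" for a b
    using Y(2) that unfolding pairwise_def by blast
  from Y(1) separated covering show ?thesis
    by (rule that)
qed

text \<open>Take a maximal partial labelling (Zorn): at an unlabelled point fewer than \<open>D\<close> directions are
  forbidden, so the labelling could be extended.\<close>

lemma locally_orthogonal_unit_labelling:
  fixes Y :: "'a::metric_space set"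
  assumes "\<rho> > 0"
    and fin: "\<And>y. y \<in> Y \<Longrightarrow> finite (A y) \<and> finite (Y \<inter> ball y \<rho>)"
    and dim: "\<And>y. y \<in> Y \<Longrightarrow> card (A y) + card (Y \<inter> ball y \<rho>) \<le> D"
  obtains e where "\<And>y. y \<in> Y \<Longrightarrow> e y \<in> RD D \<and> vnorm D (e y) = 1 \<and> (\<forall>b\<in>A y. vinner D b (e y) = 0)"
    "\<And>y y'. y \<in> Y \<Longrightarrow> y' \<in> Y \<Longrightarrow> y \<noteq> y' \<Longrightarrow> dist y y' < \<rho> \<Longrightarrow> vinner D (e y) (e y') = 0"
proof -
  define U where "U = {(y, a). y \<in> Y \<and> a \<in> RD D \<and> vnorm D a = 1 \<and> (\<forall>b\<in>A y. vinner D b a = 0)}"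
  define R where "R = (\<lambda>(y :: 'a, a) (y', a'). y \<noteq> y' \<and> (dist y y' < \<rho> \<longrightarrow> vinner D a a' = 0))"
  obtain M where M: "M \<subseteq> U" "pairwise R M" "\<And>q. q \<in> U \<Longrightarrow> pairwise R (insert q M) \<Longrightarrow> q \<in> M"
    using maximal_pairwise_subset[of U R] by blast
  have fst_inj: "inj_on fst M"
  proof (rule inj_onI, rule ccontr)
    fix q q'
    assume "q \<in> M" "q' \<in> M" "fst q = fst q'" "q \<noteq> q'"
    with M(2) show False
      unfolding pairwise_def R_def by (cases q, cases q') fastforce
  qed
  have "\<exists>a. (y, a) \<in> M" if y: "y \<in> Y" for y
  proof (rule ccontr)
    assume unlabelled: "\<nexists>a. (y, a) \<in> M"
    define near where "near = {q \<in> M. dist y (fst q) < \<rho>}"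
    have near_fst: "fst ` near \<subseteq> Y \<inter> ball y \<rho> - {y}"
      using M(1) unlabelled by (force simp: near_def U_def)
    have inj: "inj_on fst near"
      using fst_inj by (rule inj_on_subset) (auto simp: near_def)
    have finite_nbhd: "finite (Y \<inter> ball y \<rho> - {y})"
      using fin[OF y] by simp
    have "finite near"
      using finite_imageD[OF finite_subset[OF near_fst finite_nbhd] inj] .
    moreover have "card near \<le> card (Y \<inter> ball y \<rho> - {y})"
      using card_mono[OF finite_nbhd near_fst] card_image[OF inj] by simp
    moreover have "card (Y \<inter> ball y \<rho> - {y}) < card (Y \<inter> ball y \<rho>)"
      using fin[OF y] y \<open>\<rho> > 0\<close> by (intro card_Diff1_less) auto
    ultimately have "card (A y \<union> snd ` near) < D"
      using dim[OF y] card_Un_le[of "A y" "snd ` near"] card_image_le[of near snd] by linarith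
    then obtain a where a: "a \<in> RD D" "vnorm D a = 1" "\<And>b. b \<in> A y \<union> snd ` near \<Longrightarrow> vinner D b a = 0"
      using exists_unit_orthogonal fin[OF y] \<open>finite near\<close> by (metis finite_UnI finite_imageI)
    have "(y, a) \<in> U"
      using a y by (auto simp: U_def)
    moreover have "vinner D a' a = 0" if "(y', a') \<in> M" "dist y y' < \<rho>" for y' a'
      using a(3)[of a'] that by (force simp: near_def)
    then have "pairwise R (insert (y, a) M)"
      using M(2) unlabelled
      by (auto simp: pairwise_insert R_def vinner_commute dist_commute)
    ultimately show False
      using M(3) unlabelled by blast
  qed
  then obtain e where e: "\<And>y. y \<in> Y \<Longrightarrow> (y, e y) \<in> M"
    by metis
  show ?thesis
  proof (rule that)
    show "e y \<in> RD D \<and> vnorm D (e y) = 1 \<and> (\<forall>b\<in>A y. vinner D b (e y) = 0)" if "y \<in> Y" for y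
      using e[OF that] M(1) by (auto simp: U_def)
    show "vinner D (e y) (e y') = 0" if "y \<in> Y" "y' \<in> Y" "y \<noteq> y'" "dist y y' < \<rho>" for y y'
      using M(2) e that unfolding pairwise_def R_def by fastforce
  qed
qed

section \<open>Tent fields\<close>

definition tent :: "real \<Rightarrow> 'a::metric_space \<Rightarrow> 'a \<Rightarrow> real" where
  "tent \<rho> y p = max 0 (1 - dist p y / \<rho>)"

definition tent_field :: "real \<Rightarrow> 'a::metric_space set \<Rightarrow> ('a \<Rightarrow> nat \<Rightarrow> real) \<Rightarrow> 'a \<Rightarrow> nat \<Rightarrow> real" where
  "tent_field \<rho> Y e p = (\<lambda>i. \<Sum>y\<in>Y \<inter> ball p \<rho>. tent \<rho> y p * e y i)"

lemma tent_nonneg: "0 \<le> tent \<rho> y p"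
  by (simp add: tent_def)

lemma tent_le_one: "\<rho> > 0 \<Longrightarrow> tent \<rho> y p \<le> 1"
  by (simp add: tent_def)

lemma tent_eq_0: "\<rho> > 0 \<Longrightarrow> \<rho> \<le> dist p y \<Longrightarrow> tent \<rho> y p = 0"
  by (simp add: tent_def)

lemma tent_ge_half: "\<rho> > 0 \<Longrightarrow> dist p y \<le> \<rho> / 2 \<Longrightarrow> 1 / 2 \<le> tent \<rho> y p"
  by (simp add: tent_def field_simps)

lemma tent_lipschitz:
  assumes "\<rho> > 0"
  shows "\<bar>tent \<rho> y p - tent \<rho> y q\<bar> \<le> dist p q / \<rho>"
proof -
  have "\<bar>dist p y - dist q y\<bar> \<le> dist p q"
    using dist_triangle[of p y q] dist_triangle[of q y p] dist_commute[of p q] by linarith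
  then have "\<bar>(1 - dist p y / \<rho>) - (1 - dist q y / \<rho>)\<bar> \<le> dist p q / \<rho>"
    using assms by (simp add: divide_simps abs_le_iff)
  then show ?thesis
    unfolding tent_def by linarith
qed

lemma tent_field_eq_sum_superset:
  assumes "\<rho> > 0" "finite T" "Y \<inter> ball p \<rho> \<subseteq> T" "T \<subseteq> Y"
  shows "tent_field \<rho> Y e p = (\<lambda>i. \<Sum>y\<in>T. tent \<rho> y p * e y i)"
proof
  fix i
  have "tent \<rho> y p = 0" if "y \<in> T - Y \<inter> ball p \<rho>" for y
    using that assms(4) by (intro tent_eq_0[OF assms(1)]) (auto simp: not_less)
  then have "\<forall>y\<in>T - Y \<inter> ball p \<rho>. tent \<rho> y p * e y i = 0"
    by simp
  then show "tent_field \<rho> Y e p i = (\<Sum>y\<in>T. tent \<rho> y p * e y i)"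
    unfolding tent_field_def by (rule sum.mono_neutral_left[OF assms(2,3)])
qed

lemma tent_field_in_RD: "(\<And>y. y \<in> Y \<Longrightarrow> e y \<in> RD D) \<Longrightarrow> tent_field \<rho> Y e p \<in> RD D"
  by (auto simp: tent_field_def RD_def intro!: sum.neutral)

lemma vnorm_tent_field_le:
  assumes "\<rho> > 0" "finite (Y \<inter> ball p \<rho>)" "\<And>y. y \<in> Y \<Longrightarrow> vnorm D (e y) = 1"
  shows "vnorm D (tent_field \<rho> Y e p) \<le> card (Y \<inter> ball p \<rho>)"
proof -
  have "vnorm D (tent_field \<rho> Y e p) \<le> (\<Sum>y\<in>Y \<inter> ball p \<rho>. \<bar>tent \<rho> y p\<bar> * vnorm D (e y))"
    unfolding tent_field_def by (rule vnorm_sum_le[OF assms(2)])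
  also have "\<dots> \<le> (\<Sum>y\<in>Y \<inter> ball p \<rho>. 1)"
    using assms(1,3) by (intro sum_mono) (simp add: tent_nonneg tent_le_one)
  finally show ?thesis
    by simp
qed

lemma abs_vinner_tent_field_le:
  fixes c :: real
  assumes "\<rho> > 0" "finite (Y \<inter> ball p \<rho>)" "\<And>y. y \<in> Y \<inter> ball p \<rho> \<Longrightarrow> \<bar>vinner D x (e y)\<bar> \<le> c"
  shows "\<bar>vinner D x (tent_field \<rho> Y e p)\<bar> \<le> card (Y \<inter> ball p \<rho>) * c"
proof -
  have "\<bar>vinner D x (tent_field \<rho> Y e p)\<bar> \<le> (\<Sum>y\<in>Y \<inter> ball p \<rho>. \<bar>tent \<rho> y p * vinner D x (e y)\<bar>)"
    unfolding tent_field_def vinner_sum_right by (rule sum_abs)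
  also have "\<dots> \<le> (\<Sum>y\<in>Y \<inter> ball p \<rho>. c)"
  proof (rule sum_mono)
    fix y
    assume "y \<in> Y \<inter> ball p \<rho>"
    then have "tent \<rho> y p * \<bar>vinner D x (e y)\<bar> \<le> \<bar>vinner D x (e y)\<bar>" "\<bar>vinner D x (e y)\<bar> \<le> c"
      using assms(1,3) by (simp_all add: mult_left_le_one_le tent_nonneg tent_le_one)
    then show "\<bar>tent \<rho> y p * vinner D x (e y)\<bar> \<le> c"
      by (simp add: abs_mult tent_nonneg)
  qed
  finally show ?thesis
    by simp
qed

text \<open>The vector \<open>e y\<^sub>0\<close> of a point at distance at most \<open>\<rho>/2\<close> is orthogonal to all other
  vectors in the sum, so it picks out the coefficient \<open>tent \<rho> y\<^sub>0 p \<ge> 1/2\<close>.\<close>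

lemma vnorm_tent_field_ge_half:
  assumes "\<rho> > 0" "finite (Y \<inter> ball p \<rho>)" "y0 \<in> Y" "dist p y0 \<le> \<rho> / 2" "vnorm D (e y0) = 1"
    and orth: "\<And>y. y \<in> Y \<inter> ball p \<rho> \<Longrightarrow> y \<noteq> y0 \<Longrightarrow> vinner D (e y0) (e y) = 0"
  shows "1 / 2 \<le> vnorm D (tent_field \<rho> Y e p)"
proof -
  have y0: "y0 \<in> Y \<inter> ball p \<rho>"
    using assms(1,3,4) by simp
  have "vinner D (e y0) (tent_field \<rho> Y e p) = (\<Sum>y\<in>Y \<inter> ball p \<rho>. tent \<rho> y p * vinner D (e y0) (e y))"
    unfolding tent_field_def by (rule vinner_sum_right)
  also have "\<dots> = tent \<rho> y0 p * vinner D (e y0) (e y0)"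
    using orth by (subst sum.remove[OF assms(2) y0]) (simp add: sum.neutral)
  also have "\<dots> = tent \<rho> y0 p"
    using assms(5) vnorm_power2[of D "e y0"] by simp
  finally have "tent \<rho> y0 p \<le> vnorm D (e y0) * vnorm D (tent_field \<rho> Y e p)"
    using abs_vinner_le[of D "e y0" "tent_field \<rho> Y e p"] by simp
  then show ?thesis
    using tent_ge_half[OF assms(1,4)] assms(5) by simp
qed

lemma tent_field_lipschitz:
  assumes "\<rho> > 0" "finite (Y \<inter> ball p \<rho>)" "finite (Y \<inter> ball q \<rho>)"
    and "\<And>y. y \<in> Y \<Longrightarrow> vnorm D (e y) = 1"
  shows "vnorm D (\<lambda>i. tent_field \<rho> Y e p i - tent_field \<rho> Y e q i)
           \<le> (card (Y \<inter> ball p \<rho>) + card (Y \<inter> ball q \<rho>)) / \<rho> * dist p q"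
proof -
  define T where "T = Y \<inter> ball p \<rho> \<union> Y \<inter> ball q \<rho>"
  have T: "finite T" "T \<subseteq> Y"
    using assms(2,3) by (auto simp: T_def)
  have "(\<lambda>i. tent_field \<rho> Y e p i - tent_field \<rho> Y e q i) = (\<lambda>i. \<Sum>y\<in>T. (tent \<rho> y p - tent \<rho> y q) * e y i)"
    using tent_field_eq_sum_superset[OF assms(1) T(1) _ T(2), of p e]
      tent_field_eq_sum_superset[OF assms(1) T(1) _ T(2), of q e]
    by (simp add: T_def left_diff_distrib sum_subtractf)
  then have "vnorm D (\<lambda>i. tent_field \<rho> Y e p i - tent_field \<rho> Y e q i)
               \<le> (\<Sum>y\<in>T. \<bar>tent \<rho> y p - tent \<rho> y q\<bar> * vnorm D (e y))"
    using vnorm_sum_le[OF T(1), of D "\<lambda>y. tent \<rho> y p - tent \<rho> y q" e] by simp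
  also have "\<dots> \<le> (\<Sum>y\<in>T. dist p q / \<rho>)"
    using T(2) assms(4) tent_lipschitz[OF assms(1)] by (intro sum_mono) (simp add: subset_iff)
  also have "\<dots> = card T * (dist p q / \<rho>)"
    by simp
  also have "\<dots> \<le> (card (Y \<inter> ball p \<rho>) + card (Y \<inter> ball q \<rho>)) * (dist p q / \<rho>)"
    using card_Un_le[of "Y \<inter> ball p \<rho>" "Y \<inter> ball q \<rho>"] assms(1)
    by (intro mult_right_mono) (simp_all add: T_def flip: of_nat_add)
  finally show ?thesis
    by simp
qed

lemma abs_vinner_le_of_orthogonal:
  assumes "vinner D b c = 0"
  shows "\<bar>vinner D a c\<bar> \<le> vnorm D (\<lambda>i. a i - b i) * vnorm D c"
  using abs_vinner_le[of D "\<lambda>i. a i - b i" c] assms by (simp add: vinner_diff_left)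

lemma orthogonally_labelled_net:
  fixes X :: "'a::metric_space set" and v :: "nat \<Rightarrow> 'a \<Rightarrow> nat \<Rightarrow> real"
  assumes "doubling X K" "r > 0" "m + K ^ 3 \<le> D"
  obtains Y e where "Y \<subseteq> X" "\<And>p. p \<in> X \<Longrightarrow> \<exists>y\<in>Y. dist p y < r"
    "\<And>p. p \<in> X \<Longrightarrow> finite (Y \<inter> ball p (2 * r))" "\<And>p. p \<in> X \<Longrightarrow> card (Y \<inter> ball p (2 * r)) \<le> K\<^sup>2"
    "\<And>y. y \<in> Y \<Longrightarrow> e y \<in> RD D \<and> vnorm D (e y) = 1 \<and> (\<forall>k\<in>{1..m}. vinner D (v k y) (e y) = 0)"
    "\<And>y y'. y \<in> Y \<Longrightarrow> y' \<in> Y \<Longrightarrow> y \<noteq> y' \<Longrightarrow> dist y y' < 4 * r \<Longrightarrow> vinner D (e y) (e y') = 0"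
proof -
  obtain Y where Y: "Y \<subseteq> X" "\<And>a b. a \<in> Y \<Longrightarrow> b \<in> Y \<Longrightarrow> a \<noteq> b \<Longrightarrow> r \<le> dist a b"
      "\<And>p. p \<in> X \<Longrightarrow> \<exists>y\<in>Y. dist p y < r"
    using separated_net_exists[OF assms(2)] by blast
  have conflicts: "finite (Y \<inter> ball y (4 * r))" "card (Y \<inter> ball y (4 * r)) \<le> K ^ 3" if "y \<in> Y" for y
    using doubling_separated_card_le[OF assms(1) _ _ Y(1,2), of y "4 * r" 3] that Y(1) assms(2)
    by auto
  have tents: "finite (Y \<inter> ball p (2 * r))" "card (Y \<inter> ball p (2 * r)) \<le> K\<^sup>2" if "p \<in> X" for p
    using doubling_separated_card_le[OF assms(1) that _ Y(1,2), of "2 * r" 2] assms(2)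
    by (auto simp: power2_eq_square)
  have "card ((\<lambda>k. v k y) ` {1..m}) + card (Y \<inter> ball y (4 * r)) \<le> D" if "y \<in> Y" for y
    using card_image_le[of "{1..m}" "\<lambda>k. v k y"] conflicts(2)[OF that] assms(3) by simp
  then obtain e where e: "\<And>y. y \<in> Y \<Longrightarrow> e y \<in> RD D \<and> vnorm D (e y) = 1 \<and>
        (\<forall>b\<in>(\<lambda>k. v k y) ` {1..m}. vinner D b (e y) = 0)"
      "\<And>y y'. y \<in> Y \<Longrightarrow> y' \<in> Y \<Longrightarrow> y \<noteq> y' \<Longrightarrow> dist y y' < 4 * r \<Longrightarrow> vinner D (e y) (e y') = 0"
    using locally_orthogonal_unit_labelling[of "4 * r" Y "\<lambda>y. (\<lambda>k. v k y) ` {1..m}" D] assms(2) conflicts(1)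
    by auto
  have "e y \<in> RD D \<and> vnorm D (e y) = 1 \<and> (\<forall>k\<in>{1..m}. vinner D (v k y) (e y) = 0)" if "y \<in> Y" for y
    using e(1)[OF that] by blast
  from Y(1,3) tents this e(2) show ?thesis
    by (rule that)
qed

lemma almost_orthogonal_lipschitz_field:
  fixes X :: "'a::metric_space set" and v :: "nat \<Rightarrow> 'a \<Rightarrow> nat \<Rightarrow> real"
  assumes "doubling X K" "r > 0" "m + K ^ 3 \<le> D" "0 \<le> L"
    and lip: "\<And>k x y. k \<in> {1..m} \<Longrightarrow> x \<in> X \<Longrightarrow> y \<in> X \<Longrightarrow>
      vnorm D (\<lambda>i. v k x i - v k y i) \<le> L * dist x y"
  obtains w where "\<And>p. p \<in> X \<Longrightarrow> w p \<in> RD D"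
    "\<And>p. p \<in> X \<Longrightarrow> 1 / 2 \<le> vnorm D (w p) \<and> vnorm D (w p) \<le> real K ^ 2"
    "\<And>p k. p \<in> X \<Longrightarrow> k \<in> {1..m} \<Longrightarrow> \<bar>vinner D (v k p) (w p)\<bar> \<le> real K ^ 2 * (L * (2 * r))"
    "\<And>p q. p \<in> X \<Longrightarrow> q \<in> X \<Longrightarrow> vnorm D (\<lambda>i. w p i - w q i) \<le> real K ^ 2 / r * dist p q"
proof -
  obtain Y e where Y: "Y \<subseteq> X" "\<And>p. p \<in> X \<Longrightarrow> \<exists>y\<in>Y. dist p y < r"
      and tents: "\<And>p. p \<in> X \<Longrightarrow> finite (Y \<inter> ball p (2 * r))"
        "\<And>p. p \<in> X \<Longrightarrow> card (Y \<inter> ball p (2 * r)) \<le> K\<^sup>2"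
      and e: "\<And>y. y \<in> Y \<Longrightarrow> e y \<in> RD D \<and> vnorm D (e y) = 1 \<and> (\<forall>k\<in>{1..m}. vinner D (v k y) (e y) = 0)"
        "\<And>y y'. y \<in> Y \<Longrightarrow> y' \<in> Y \<Longrightarrow> y \<noteq> y' \<Longrightarrow> dist y y' < 4 * r \<Longrightarrow> vinner D (e y) (e y') = 0"
    using orthogonally_labelled_net[where v = v, OF assms(1-3)] by blast
  define w where "w = tent_field (2 * r) Y e"
  have r2: "2 * r > 0"
    using assms(2) by simp
  show ?thesis
  proof (rule that)
    show "w p \<in> RD D" for p
      unfolding w_def using e(1) by (intro tent_field_in_RD) blast
  next
    fix p
    assume p: "p \<in> X"
    then obtain y0 where y0: "y0 \<in> Y" "dist p y0 < r"
      using Y(2) by blast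
    have "vinner D (e y0) (e y) = 0" if "y \<in> Y \<inter> ball p (2 * r)" "y \<noteq> y0" for y
    proof (rule e(2))
      show "dist y0 y < 4 * r"
        using that y0(2) dist_triangle3[of y0 y p] assms(2) by auto
    qed (use y0(1) that in auto)
    then have "1 / 2 \<le> vnorm D (w p)"
      unfolding w_def using y0 e(1)[OF y0(1)]
      by (intro vnorm_tent_field_ge_half[OF r2 tents(1)[OF p]]) auto
    moreover have "vnorm D (w p) \<le> real K ^ 2"
    proof -
      have "vnorm D (w p) \<le> card (Y \<inter> ball p (2 * r))"
        unfolding w_def using e(1) by (intro vnorm_tent_field_le[OF r2 tents(1)[OF p]]) blast
      also have "\<dots> \<le> real K ^ 2"
        using tents(2)[OF p] by (simp flip: of_nat_power)
      finally show ?thesis .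
    qed
    ultimately show "1 / 2 \<le> vnorm D (w p) \<and> vnorm D (w p) \<le> real K ^ 2" ..
  next
    fix p k
    assume p: "p \<in> X" and k: "k \<in> {1..m}"
    have "\<bar>vinner D (v k p) (e y)\<bar> \<le> L * (2 * r)" if "y \<in> Y \<inter> ball p (2 * r)" for y
    proof -
      have "\<bar>vinner D (v k p) (e y)\<bar> \<le> vnorm D (\<lambda>i. v k p i - v k y i)"
        using abs_vinner_le_of_orthogonal[of D "v k y" "e y" "v k p"] e(1) k that by auto
      also have "\<dots> \<le> L * dist p y"
        using lip[OF k p] Y(1) that by blast
      also have "\<dots> \<le> L * (2 * r)"
        using that assms(4) by (intro mult_left_mono) auto
      finally show ?thesis .
    qed
    then have "\<bar>vinner D (v k p) (w p)\<bar> \<le> card (Y \<inter> ball p (2 * r)) * (L * (2 * r))"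
      unfolding w_def by (rule abs_vinner_tent_field_le[OF r2 tents(1)[OF p]])
    also have "\<dots> \<le> real K ^ 2 * (L * (2 * r))"
      using tents(2)[OF p] assms(2,4) by (intro mult_right_mono) (simp_all flip: of_nat_power)
    finally show "\<bar>vinner D (v k p) (w p)\<bar> \<le> real K ^ 2 * (L * (2 * r))" .
  next
    fix p q
    assume p: "p \<in> X" and q: "q \<in> X"
    have "vnorm D (\<lambda>i. w p i - w q i)
            \<le> (card (Y \<inter> ball p (2 * r)) + card (Y \<inter> ball q (2 * r))) / (2 * r) * dist p q"
      unfolding w_def using e(1)
      by (intro tent_field_lipschitz[OF r2 tents(1)[OF p] tents(1)[OF q]]) blast
    also have "\<dots> \<le> (real K ^ 2 + real K ^ 2) / (2 * r) * dist p q"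
      using tents(2)[OF p] tents(2)[OF q] r2
      by (intro mult_right_mono divide_right_mono) (simp_all flip: of_nat_power of_nat_add)
    finally show "vnorm D (\<lambda>i. w p i - w q i) \<le> real K ^ 2 / r * dist p q"
      using assms(2) by simp
  qed
qed

section \<open>The function spaces\<close>

lemma lipnormV_nonneg: "lipschitzV D X f \<Longrightarrow> 0 \<le> lipnormV D X f"
  unfolding lipnormV_def lipschitzV_def by (intro cSup_upper) auto

lemma vnorm_diff_le_lipnormV:
  assumes "lipschitzV D X f" "x \<in> X" "y \<in> X"
  shows "vnorm D (\<lambda>i. f x i - f y i) \<le> lipnormV D X f * dist x y"
proof (cases "x = y")
  case True
  with lipnormV_nonneg[OF assms(1)] show ?thesis
    by simp
next
  case False
  then have "vnorm D (\<lambda>i. f x i - f y i) / dist x y \<in> lipqV D X f"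
    using assms unfolding lipqV_def by blast
  then have "vnorm D (\<lambda>i. f x i - f y i) / dist x y \<le> lipnormV D X f"
    using assms(1) unfolding lipnormV_def lipschitzV_def by (intro cSup_upper) auto
  with False show ?thesis
    by (simp add: divide_le_eq)
qed

lemma lipnormV_le:
  assumes "\<And>x y. x \<in> X \<Longrightarrow> y \<in> X \<Longrightarrow> vnorm D (\<lambda>i. f x i - f y i) \<le> c * dist x y" "0 \<le> c"
  shows "lipschitzV D X f" "lipnormV D X f \<le> c"
proof -
  have le: "q \<le> c" if q: "q \<in> lipqV D X f" for q
  proof -
    obtain x y where "q = vnorm D (\<lambda>i. f x i - f y i) / dist x y" "x \<in> X" "y \<in> X" "x \<noteq> y"
      using q unfolding lipqV_def by blast
    with assms(1)[of x y] show ?thesis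
      by (simp add: divide_le_eq)
  qed
  then show "lipschitzV D X f"
    unfolding lipschitzV_def by (rule bdd_aboveI)
  show "lipnormV D X f \<le> c"
    unfolding lipnormV_def using le assms(2) by (intro cSup_least) auto
qed

lemma linfV_le:
  assumes "\<And>x. x \<in> X \<Longrightarrow> vnorm D (f x) \<le> c" "0 \<le> c"
  shows "boundedV D X f" "0 \<le> linfV D X f" "linfV D X f \<le> c"
proof -
  show bdd: "boundedV D X f"
    unfolding boundedV_def using assms(1) by (intro bdd_aboveI) auto
  show "0 \<le> linfV D X f"
    using bdd unfolding linfV_def boundedV_def by (intro cSup_upper) auto
  show "linfV D X f \<le> c"
    unfolding linfV_def using assms by (intro cSup_least) auto
qed

locale frame_function_spaces =
  fixes X :: "'a::metric_space set" and D :: nat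
    and F1 :: "('a \<Rightarrow> real) set" and N1 :: "('a \<Rightarrow> real) \<Rightarrow> real"
    and F :: "('a \<Rightarrow> nat \<Rightarrow> real) set" and N :: "('a \<Rightarrow> nat \<Rightarrow> real) \<Rightarrow> real"
    and C3 C4 :: real and Cinv Cabs Capp :: "real \<Rightarrow> real"
  assumes normed_F1: "normed_fs_R F1 N1"
    and normed_F: "normed_fs_V F N"
    and mult_closed: "\<forall>f\<in>F1. \<forall>u\<in>F. (\<lambda>x i. f x * u x i) \<in> F \<and>
                       N (\<lambda>x i. f x * u x i) \<le> C3 * N1 f * N u"
    and inner_closed: "\<forall>u\<in>F. \<forall>w\<in>F. (\<lambda>x. vinner D (u x) (w x)) \<in> F1 \<and>
                       N1 (\<lambda>x. vinner D (u x) (w x)) \<le> C4 * N u * N w"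
    and inverse_closed: "\<forall>f\<in>F1. \<forall>c>0. (\<forall>x\<in>X. f x \<ge> c) \<longrightarrow>
                       (\<lambda>x. 1 / f x) \<in> F1 \<and> N1 (\<lambda>x. 1 / f x) \<le> Cinv c * N1 f"
    and vnorm_closed: "\<forall>u\<in>F. \<forall>c>0. (\<forall>x\<in>X. vnorm D (u x) \<ge> c) \<longrightarrow>
                       (\<lambda>x. vnorm D (u x)) \<in> F1 \<and> N1 (\<lambda>x. vnorm D (u x)) \<le> Cabs c * N u"
    and approximation: "\<forall>\<delta>>0. \<forall>w. (\<forall>x\<in>X. w x \<in> RD D) \<longrightarrow> lipschitzV D X w \<longrightarrow> lipnormV D X w \<le> 1 \<longrightarrow>
        (\<exists>u\<in>F. (\<exists>\<epsilon><\<delta>. \<forall>x\<in>X. vnorm D (\<lambda>i. u x i - w x i) \<le> \<epsilon>) \<and>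
                (boundedV D X w \<longrightarrow> N u \<le> Capp \<delta> * (linfV D X w + lipnormV D X w)))"
begin

lemma N1_nonneg: "f \<in> F1 \<Longrightarrow> 0 \<le> N1 f"
  using normed_F1 unfolding normed_fs_R_def normed_lin_space_def by blast

lemma N_nonneg: "u \<in> F \<Longrightarrow> 0 \<le> N u"
  and zero_in_F: "(\<lambda>x i. 0) \<in> F"
  and N_zero: "N (\<lambda>x i. 0) = 0"
  and add_in_F: "u \<in> F \<Longrightarrow> w \<in> F \<Longrightarrow> (\<lambda>x i. u x i + w x i) \<in> F"
  and N_add_le: "u \<in> F \<Longrightarrow> w \<in> F \<Longrightarrow> N (\<lambda>x i. u x i + w x i) \<le> N u + N w"
  and scale_in_F: "u \<in> F \<Longrightarrow> (\<lambda>x i. a * u x i) \<in> F"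
  and N_scale: "u \<in> F \<Longrightarrow> N (\<lambda>x i. a * u x i) = \<bar>a\<bar> * N u"
  using normed_F unfolding normed_fs_V_def normed_lin_space_def by blast+

lemma diff_in_F: "u \<in> F \<Longrightarrow> w \<in> F \<Longrightarrow> (\<lambda>x i. u x i - w x i) \<in> F"
  and N_diff_le: "u \<in> F \<Longrightarrow> w \<in> F \<Longrightarrow> N (\<lambda>x i. u x i - w x i) \<le> N u + N w"
  using add_in_F[of u "\<lambda>x i. (-1) * w x i"] N_add_le[of u "\<lambda>x i. (-1) * w x i"]
    scale_in_F[of w "-1"] N_scale[of w "-1"]
  by simp_all

lemma mult_in_F:
  assumes "f \<in> F1" "u \<in> F"
  shows "(\<lambda>x i. f x * u x i) \<in> F" "N (\<lambda>x i. f x * u x i) \<le> \<bar>C3\<bar> * N1 f * N u"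
proof -
  show "(\<lambda>x i. f x * u x i) \<in> F"
    using mult_closed assms by blast
  have "C3 * N1 f * N u \<le> \<bar>C3\<bar> * N1 f * N u"
    using N1_nonneg[OF assms(1)] N_nonneg[OF assms(2)] by (intro mult_right_mono) auto
  then show "N (\<lambda>x i. f x * u x i) \<le> \<bar>C3\<bar> * N1 f * N u"
    using mult_closed assms by fastforce
qed

lemma inner_in_F1:
  assumes "u \<in> F" "w \<in> F"
  shows "(\<lambda>x. vinner D (u x) (w x)) \<in> F1" "N1 (\<lambda>x. vinner D (u x) (w x)) \<le> \<bar>C4\<bar> * N u * N w"
proof -
  show "(\<lambda>x. vinner D (u x) (w x)) \<in> F1"
    using inner_closed assms by blast
  have "C4 * N u * N w \<le> \<bar>C4\<bar> * N u * N w"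
    using N_nonneg[OF assms(1)] N_nonneg[OF assms(2)] by (intro mult_right_mono) auto
  then show "N1 (\<lambda>x. vinner D (u x) (w x)) \<le> \<bar>C4\<bar> * N u * N w"
    using inner_closed assms by fastforce
qed

lemma sum_in_F:
  assumes "finite S" "\<And>k. k \<in> S \<Longrightarrow> g k \<in> F"
  shows "(\<lambda>x i. \<Sum>k\<in>S. g k x i) \<in> F \<and> N (\<lambda>x i. \<Sum>k\<in>S. g k x i) \<le> (\<Sum>k\<in>S. N (g k))"
  using assms
proof (induction S rule: finite_induct)
  case empty
  then show ?case
    using zero_in_F N_zero by simp
next
  case (insert k S)
  then show ?case
    using add_in_F[of "g k" "\<lambda>x i. \<Sum>k\<in>S. g k x i"] N_add_le[of "g k" "\<lambda>x i. \<Sum>k\<in>S. g k x i"]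
    by simp
qed

lemma proj_off_in_F:
  assumes "u \<in> F" and frame: "\<And>k. k \<in> {1..m} \<Longrightarrow> v k \<in> F \<and> N (v k) \<le> 1"
  shows "(\<lambda>x. proj_off D m (\<lambda>k. v k x) (u x)) \<in> F"
    "N (\<lambda>x. proj_off D m (\<lambda>k. v k x) (u x)) \<le> (1 + m * \<bar>C3\<bar> * \<bar>C4\<bar>) * N u"
proof -
  define g where "g k = (\<lambda>x i. vinner D (u x) (v k x) * v k x i)" for k
  have g: "g k \<in> F" "N (g k) \<le> \<bar>C3\<bar> * \<bar>C4\<bar> * N u" if k: "k \<in> {1..m}" for k
  proof -
    have v: "v k \<in> F" "0 \<le> N (v k)" "N (v k) \<le> 1"
      using frame[OF k] N_nonneg by auto
    note coeff = inner_in_F1[OF assms(1) v(1)]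
    show "g k \<in> F"
      unfolding g_def by (rule mult_in_F(1)[OF coeff(1) v(1)])
    have "N (g k) \<le> \<bar>C3\<bar> * N1 (\<lambda>x. vinner D (u x) (v k x)) * N (v k)"
      unfolding g_def by (rule mult_in_F(2)[OF coeff(1) v(1)])
    also have "\<dots> \<le> \<bar>C3\<bar> * (\<bar>C4\<bar> * N u) * 1"
    proof (intro mult_mono mult_left_mono)
      show "N1 (\<lambda>x. vinner D (u x) (v k x)) \<le> \<bar>C4\<bar> * N u"
        using coeff(2) mult_left_mono[OF v(3), of "\<bar>C4\<bar> * N u"] N_nonneg[OF assms(1)] by simp
    qed (use v N1_nonneg[OF coeff(1)] N_nonneg[OF assms(1)] in auto)
    finally show "N (g k) \<le> \<bar>C3\<bar> * \<bar>C4\<bar> * N u"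
      by simp
  qed
  have S: "(\<lambda>x i. \<Sum>k\<in>{1..m}. g k x i) \<in> F" "N (\<lambda>x i. \<Sum>k\<in>{1..m}. g k x i) \<le> m * (\<bar>C3\<bar> * \<bar>C4\<bar> * N u)"
  proof -
    note sum = sum_in_F[of "{1..m}" g, OF finite_atLeastAtMost g(1)]
    show "(\<lambda>x i. \<Sum>k\<in>{1..m}. g k x i) \<in> F"
      using sum by blast
    have "(\<Sum>k\<in>{1..m}. N (g k)) \<le> m * (\<bar>C3\<bar> * \<bar>C4\<bar> * N u)"
      using sum_bounded_above[of "{1..m}" "\<lambda>k. N (g k)"] g(2) by simp
    with sum show "N (\<lambda>x i. \<Sum>k\<in>{1..m}. g k x i) \<le> m * (\<bar>C3\<bar> * \<bar>C4\<bar> * N u)"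
      by linarith
  qed
  have eq: "(\<lambda>x. proj_off D m (\<lambda>k. v k x) (u x)) = (\<lambda>x i. u x i - (\<Sum>k\<in>{1..m}. g k x i))"
    by (simp add: proj_off_def g_def)
  show "(\<lambda>x. proj_off D m (\<lambda>k. v k x) (u x)) \<in> F"
    unfolding eq using diff_in_F[OF assms(1) S(1)] .
  show "N (\<lambda>x. proj_off D m (\<lambda>k. v k x) (u x)) \<le> (1 + m * \<bar>C3\<bar> * \<bar>C4\<bar>) * N u"
    unfolding eq using N_diff_le[OF assms(1) S(1)] S(2) by (simp add: algebra_simps)
qed

lemma normalise_in_F:
  assumes "u \<in> F" "c > 0" "\<And>x. x \<in> X \<Longrightarrow> c \<le> vnorm D (u x)"
  shows "(\<lambda>x i. (1 / vnorm D (u x)) * u x i) \<in> F"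
    "N (\<lambda>x i. (1 / vnorm D (u x)) * u x i) \<le> \<bar>C3\<bar> * \<bar>Cinv c\<bar> * \<bar>Cabs c\<bar> * (N u)\<^sup>2"
proof -
  have norm: "(\<lambda>x. vnorm D (u x)) \<in> F1" "N1 (\<lambda>x. vnorm D (u x)) \<le> Cabs c * N u"
    using vnorm_closed assms by auto
  then have inv: "(\<lambda>x. 1 / vnorm D (u x)) \<in> F1"
      "N1 (\<lambda>x. 1 / vnorm D (u x)) \<le> Cinv c * N1 (\<lambda>x. vnorm D (u x))"
    using inverse_closed assms by auto
  show "(\<lambda>x i. (1 / vnorm D (u x)) * u x i) \<in> F"
    using mult_in_F(1)[OF inv(1) assms(1)] .
  have "N (\<lambda>x i. (1 / vnorm D (u x)) * u x i) \<le> \<bar>C3\<bar> * N1 (\<lambda>x. 1 / vnorm D (u x)) * N u"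
    by (rule mult_in_F(2)[OF inv(1) assms(1)])
  also have "\<dots> \<le> \<bar>C3\<bar> * (\<bar>Cinv c\<bar> * (\<bar>Cabs c\<bar> * N u)) * N u"
  proof (intro mult_right_mono mult_left_mono)
    have "N1 (\<lambda>x. 1 / vnorm D (u x)) \<le> \<bar>Cinv c\<bar> * N1 (\<lambda>x. vnorm D (u x))"
      using inv(2) N1_nonneg[OF norm(1)] abs_ge_self[of "Cinv c"] mult_right_mono by fastforce
    also have "\<dots> \<le> \<bar>Cinv c\<bar> * (\<bar>Cabs c\<bar> * N u)"
      using norm(2) N_nonneg[OF assms(1)] abs_ge_self[of "Cabs c"] mult_right_mono
      by (intro mult_left_mono) fastforce+
    finally show "N1 (\<lambda>x. 1 / vnorm D (u x)) \<le> \<bar>Cinv c\<bar> * (\<bar>Cabs c\<bar> * N u)" .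
  qed (use N_nonneg[OF assms(1)] in auto)
  finally show "N (\<lambda>x i. (1 / vnorm D (u x)) * u x i) \<le> \<bar>C3\<bar> * \<bar>Cinv c\<bar> * \<bar>Cabs c\<bar> * (N u)\<^sup>2"
    by (simp add: power2_eq_square mult.assoc)
qed

text \<open>The approximation hypothesis only applies to 1-Lipschitz fields, so an \<open>L\<close>-Lipschitz field
  is scaled down by \<open>L + 1\<close> before approximation and the approximant scaled up again.\<close>

lemma approximation_in_F:
  assumes "\<And>x. x \<in> X \<Longrightarrow> w x \<in> RD D" "0 \<le> L" "0 \<le> B" "\<eta> > 0"
    and lip: "\<And>x y. x \<in> X \<Longrightarrow> y \<in> X \<Longrightarrow> vnorm D (\<lambda>i. w x i - w y i) \<le> L * dist x y"
    and bounded: "\<And>x. x \<in> X \<Longrightarrow> vnorm D (w x) \<le> B"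
  obtains u where "u \<in> F" "\<And>x. x \<in> X \<Longrightarrow> vnorm D (\<lambda>i. u x i - w x i) \<le> \<eta>"
    "N u \<le> (L + 1) * \<bar>Capp (\<eta> / (L + 1))\<bar> * (B + 1)"
proof -
  define \<Lambda> where "\<Lambda> = L + 1"
  have \<Lambda>: "\<Lambda> \<ge> 1"
    using assms(2) by (simp add: \<Lambda>_def)
  define W where "W x = (\<lambda>i. (1 / \<Lambda>) * w x i)" for x
  have "vnorm D (\<lambda>i. W x i - W y i) \<le> 1 * dist x y" if "x \<in> X" "y \<in> X" for x y
  proof -
    have "vnorm D (\<lambda>i. W x i - W y i) = (1 / \<Lambda>) * vnorm D (\<lambda>i. w x i - w y i)"
      using vnorm_scale[of D "1 / \<Lambda>" "\<lambda>i. w x i - w y i"] \<Lambda> by (simp add: W_def right_diff_distrib)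
    also have "\<dots> \<le> (1 / \<Lambda>) * (\<Lambda> * dist x y)"
      using lip[OF that] mult_right_mono[of L \<Lambda> "dist x y"] \<Lambda>
      by (intro mult_left_mono) (auto simp: \<Lambda>_def)
    finally show ?thesis
      using \<Lambda> by simp
  qed
  then have W_lip: "lipschitzV D X W" "lipnormV D X W \<le> 1"
    using lipnormV_le[of X D W 1] by auto
  have "vnorm D (W x) \<le> B" if "x \<in> X" for x
  proof -
    have "vnorm D (W x) = (1 / \<Lambda>) * vnorm D (w x)"
      using vnorm_scale[of D "1 / \<Lambda>" "w x"] \<Lambda> by (simp add: W_def)
    also have "\<dots> \<le> 1 * vnorm D (w x)"
      using \<Lambda> by (intro mult_right_mono) auto
    finally show ?thesis
      using bounded[OF that] by simp
  qed
  then have W_bdd: "boundedV D X W" "0 \<le> linfV D X W" "linfV D X W \<le> B"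
    using linfV_le[of X D W B] assms(3) by auto
  have W_RD: "W x \<in> RD D" if "x \<in> X" for x
    using assms(1)[OF that] by (simp add: W_def RD_def)
  have "\<eta> / \<Lambda> > 0"
    using assms(4) \<Lambda> by simp
  from approximation[rule_format, OF this W_RD W_lip] obtain u0 \<epsilon> where u0: "u0 \<in> F" "\<epsilon> < \<eta> / \<Lambda>"
      "\<And>x. x \<in> X \<Longrightarrow> vnorm D (\<lambda>i. u0 x i - W x i) \<le> \<epsilon>"
      "N u0 \<le> Capp (\<eta> / \<Lambda>) * (linfV D X W + lipnormV D X W)"
    using W_bdd(1) by blast
  define u where "u = (\<lambda>x i. \<Lambda> * u0 x i)"
  show ?thesis
  proof (rule that)
    show "u \<in> F"
      unfolding u_def by (rule scale_in_F[OF u0(1)])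
  next
    fix x
    assume x: "x \<in> X"
    have "(\<lambda>i. u x i - w x i) = (\<lambda>i. \<Lambda> * (u0 x i - W x i))"
      using \<Lambda> by (auto simp: u_def W_def algebra_simps)
    then have "vnorm D (\<lambda>i. u x i - w x i) = \<Lambda> * vnorm D (\<lambda>i. u0 x i - W x i)"
      using vnorm_scale \<Lambda> by simp
    also have "\<dots> \<le> \<Lambda> * (\<eta> / \<Lambda>)"
      using u0(2) u0(3)[OF x] \<Lambda> by (intro mult_left_mono) auto
    finally show "vnorm D (\<lambda>i. u x i - w x i) \<le> \<eta>"
      using \<Lambda> by simp
  next
    have "0 \<le> linfV D X W + lipnormV D X W"
      using W_bdd(2) lipnormV_nonneg[OF W_lip(1)] by simp
    from mult_right_mono[OF abs_ge_self[of "Capp (\<eta> / \<Lambda>)"] this] u0(4)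
    have "N u0 \<le> \<bar>Capp (\<eta> / \<Lambda>)\<bar> * (linfV D X W + lipnormV D X W)"
      by linarith
    also have "\<dots> \<le> \<bar>Capp (\<eta> / \<Lambda>)\<bar> * (B + 1)"
      using W_bdd(3) W_lip(2) by (intro mult_left_mono) auto
    finally have "\<Lambda> * N u0 \<le> \<Lambda> * (\<bar>Capp (\<eta> / \<Lambda>)\<bar> * (B + 1))"
      using \<Lambda> by (intro mult_left_mono) auto
    moreover have "N u = \<Lambda> * N u0"
      using N_scale[OF u0(1), of \<Lambda>] \<Lambda> by (simp add: u_def)
    ultimately show "N u \<le> (L + 1) * \<bar>Capp (\<eta> / (L + 1))\<bar> * (B + 1)"
      by (simp add: \<Lambda>_def mult.assoc)
  qed
qed

end

section \<open>Extending the frame\<close>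

lemma net_scale_small:
  fixes c L \<eta> :: real
  assumes "0 \<le> c" "0 \<le> L" "0 < \<eta>"
  shows "c * (L * (2 * (\<eta> / (2 * (c + 1) * (L + 1))))) \<le> \<eta>"
proof -
  have "2 * (\<eta> / (2 * (c + 1) * (L + 1))) = \<eta> / ((c + 1) * (L + 1))"
    unfolding mult.assoc times_divide_eq_right by (rule mult_divide_mult_cancel_left) simp
  moreover have "c * L * \<eta> \<le> \<eta> * ((c + 1) * (L + 1))"
    using assms by (simp add: algebra_simps)
  ultimately show ?thesis
    using assms by (simp add: divide_le_eq add_nonneg_pos mult.assoc)
qed

text \<open>The constants of the construction: \<open>\<eta>\<close> is the accuracy of the approximation, \<open>r\<close> the scale
  of the net and \<open>Lw\<close> the Lipschitz constant of the field that is approximated.\<close>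

definition residual_bound :: "nat \<Rightarrow> nat \<Rightarrow> real \<Rightarrow> real \<Rightarrow> real \<Rightarrow> (real \<Rightarrow> real) \<Rightarrow> real" where
  "residual_bound K m L C3 C4 Capp =
    (let \<eta> = 1 / (8 * (real m + 1));
         r = \<eta> / (2 * (real K ^ 2 + 1) * (L + 1));
         Lw = real K ^ 2 / r
     in (1 + real m * \<bar>C3\<bar> * \<bar>C4\<bar>) * ((Lw + 1) * \<bar>Capp (\<eta> / (Lw + 1))\<bar> * (real K ^ 2 + 1)))"

definition extension_bound ::
  "nat \<Rightarrow> nat \<Rightarrow> real \<Rightarrow> real \<Rightarrow> real \<Rightarrow> (real \<Rightarrow> real) \<Rightarrow> (real \<Rightarrow> real) \<Rightarrow> (real \<Rightarrow> real) \<Rightarrow> real"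
  where "extension_bound K m L C3 C4 Cinv Cabs Capp =
    \<bar>C3\<bar> * \<bar>Cinv (1 / 4)\<bar> * \<bar>Cabs (1 / 4)\<bar> * (residual_bound K m L C3 C4 Capp)\<^sup>2"

context frame_function_spaces
begin

lemma orthogonal_residual_field:
  assumes "doubling X K" "m + K ^ 3 \<le> D" "0 \<le> L"
    and frame: "\<And>k. k \<in> {1..m} \<Longrightarrow> v k \<in> F \<and> N (v k) \<le> 1"
    and orthonormal: "\<And>p j k. p \<in> X \<Longrightarrow> j \<in> {1..m} \<Longrightarrow> k \<in> {1..m} \<Longrightarrow>
      vinner D (v j p) (v k p) = (if j = k then 1 else 0)"
    and lip: "\<And>k x y. k \<in> {1..m} \<Longrightarrow> x \<in> X \<Longrightarrow> y \<in> X \<Longrightarrow>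
      vnorm D (\<lambda>i. v k x i - v k y i) \<le> L * dist x y"
  obtains u where "u \<in> F" "N u \<le> residual_bound K m L C3 C4 Capp"
    "\<And>p. p \<in> X \<Longrightarrow> 1 / 4 \<le> vnorm D (u p)"
    "\<And>p k. p \<in> X \<Longrightarrow> k \<in> {1..m} \<Longrightarrow> vinner D (v k p) (u p) = 0"
proof -
  define \<eta> where "\<eta> = 1 / (8 * (real m + 1))"
  define r where "r = \<eta> / (2 * (real K ^ 2 + 1) * (L + 1))"
  define Lw where "Lw = real K ^ 2 / r"
  have \<eta>: "\<eta> > 0"
    by (simp add: \<eta>_def)
  with assms(3) have r: "r > 0"
    by (simp add: r_def add_nonneg_pos)
  obtain w where w: "\<And>p. p \<in> X \<Longrightarrow> w p \<in> RD D"
      "\<And>p. p \<in> X \<Longrightarrow> 1 / 2 \<le> vnorm D (w p) \<and> vnorm D (w p) \<le> real K ^ 2"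
      "\<And>p k. p \<in> X \<Longrightarrow> k \<in> {1..m} \<Longrightarrow> \<bar>vinner D (v k p) (w p)\<bar> \<le> real K ^ 2 * (L * (2 * r))"
      "\<And>p q. p \<in> X \<Longrightarrow> q \<in> X \<Longrightarrow> vnorm D (\<lambda>i. w p i - w q i) \<le> real K ^ 2 / r * dist p q"
    using almost_orthogonal_lipschitz_field[where v = v, OF assms(1) r assms(2,3) lip] by blast
  have "0 \<le> Lw"
    using r by (simp add: Lw_def)
  moreover have "vnorm D (\<lambda>i. w x i - w y i) \<le> Lw * dist x y" if "x \<in> X" "y \<in> X" for x y
    using w(4)[OF that] by (simp add: Lw_def)
  moreover have "vnorm D (w x) \<le> real K ^ 2" if "x \<in> X" for x
    using w(2)[OF that] by blast
  ultimately obtain u1 where u1: "u1 \<in> F" "\<And>x. x \<in> X \<Longrightarrow> vnorm D (\<lambda>i. u1 x i - w x i) \<le> \<eta>"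
      "N u1 \<le> (Lw + 1) * \<bar>Capp (\<eta> / (Lw + 1))\<bar> * (real K ^ 2 + 1)"
    using approximation_in_F[of w Lw "real K ^ 2" \<eta>] w(1) zero_le_power2 \<eta> by blast
  define u where "u = (\<lambda>x. proj_off D m (\<lambda>k. v k x) (u1 x))"
  show ?thesis
  proof (rule that)
    show "u \<in> F"
      unfolding u_def using proj_off_in_F[where m = m and v = v, OF u1(1) frame] by blast
    have "N u \<le> (1 + m * \<bar>C3\<bar> * \<bar>C4\<bar>) * N u1"
      unfolding u_def using proj_off_in_F[where m = m and v = v, OF u1(1) frame] by blast
    with mult_left_mono[OF u1(3), of "1 + m * \<bar>C3\<bar> * \<bar>C4\<bar>"]
    show "N u \<le> residual_bound K m L C3 C4 Capp"
      unfolding residual_bound_def Let_def by (simp add: Lw_def r_def \<eta>_def)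
  next
    fix p
    assume p: "p \<in> X"
    have "\<bar>vinner D (v k p) (w p)\<bar> \<le> \<eta>" if "k \<in> {1..m}" for k
      using w(3)[OF p that] net_scale_small[OF zero_le_power2 assms(3) \<eta>, of "real K"] unfolding r_def
      by linarith
    moreover have "vnorm D (v k p) = 1" if "k \<in> {1..m}" for k
      using orthonormal[OF p that that] by (simp add: vnorm_def)
    ultimately have "1 / 2 - (2 * real m + 1) * \<eta> \<le> vnorm D (u p)"
      unfolding u_def using w(2)[OF p] u1(2)[OF p]
      by (intro vnorm_proj_off_near_ge[where b = "\<lambda>k. v k p" and w = "w p"]) auto
    moreover have "(2 * real m + 1) * \<eta> \<le> 1 / 4"
      by (simp add: \<eta>_def field_simps)
    ultimately show "1 / 4 \<le> vnorm D (u p)"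
      by linarith
    show "vinner D (v k p) (u p) = 0" if "k \<in> {1..m}" for k
      unfolding u_def using orthonormal[OF p] that by (rule vinner_proj_off)
  qed
qed

lemma unit_orthogonal_extension:
  assumes "doubling X K" "m + K ^ 3 \<le> D" "0 \<le> L"
    and frame: "\<And>k. k \<in> {1..m} \<Longrightarrow> v k \<in> F \<and> N (v k) \<le> 1"
    and orthonormal: "\<And>p j k. p \<in> X \<Longrightarrow> j \<in> {1..m} \<Longrightarrow> k \<in> {1..m} \<Longrightarrow>
      vinner D (v j p) (v k p) = (if j = k then 1 else 0)"
    and lip: "\<And>k x y. k \<in> {1..m} \<Longrightarrow> x \<in> X \<Longrightarrow> y \<in> X \<Longrightarrow>
      vnorm D (\<lambda>i. v k x i - v k y i) \<le> L * dist x y"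
  shows "\<exists>u\<in>F. N u \<le> extension_bound K m L C3 C4 Cinv Cabs Capp \<and>
    (\<forall>p\<in>X. vnorm D (u p) = 1 \<and> (\<forall>k\<in>{1..m}. vinner D (v k p) (u p) = 0))"
proof -
  obtain u where u: "u \<in> F" "N u \<le> residual_bound K m L C3 C4 Capp"
      "\<And>p. p \<in> X \<Longrightarrow> 1 / 4 \<le> vnorm D (u p)"
      "\<And>p k. p \<in> X \<Longrightarrow> k \<in> {1..m} \<Longrightarrow> vinner D (v k p) (u p) = 0"
    using orthogonal_residual_field[where v = v, OF assms] by blast
  define n where "n = (\<lambda>x i. (1 / vnorm D (u x)) * u x i)"
  have n: "n \<in> F" "N n \<le> \<bar>C3\<bar> * \<bar>Cinv (1 / 4)\<bar> * \<bar>Cabs (1 / 4)\<bar> * (N u)\<^sup>2"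
    unfolding n_def using normalise_in_F[OF u(1) _ u(3)] by simp_all
  have "(N u)\<^sup>2 \<le> (residual_bound K m L C3 C4 Capp)\<^sup>2"
    using u(2) N_nonneg[OF u(1)] by (rule power_mono)
  from mult_left_mono[OF this, of "\<bar>C3\<bar> * \<bar>Cinv (1 / 4)\<bar> * \<bar>Cabs (1 / 4)\<bar>"] n(2)
  have "N n \<le> extension_bound K m L C3 C4 Cinv Cabs Capp"
    unfolding extension_bound_def by simp
  moreover have "vnorm D (n p) = 1" if "p \<in> X" for p
  proof -
    have "vnorm D (u p) > 0"
      using u(3)[OF that] by linarith
    then show ?thesis
      using vnorm_scale[of D "1 / vnorm D (u p)" "u p"] by (simp add: n_def)
  qed
  moreover have "vinner D (v k p) (n p) = 0" if "p \<in> X" "k \<in> {1..m}" for p k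
    using vinner_scale_right[of D "v k p" "1 / vnorm D (u p)" "u p"] u(4)[OF that] by (simp add: n_def)
  ultimately show ?thesis
    using n(1) by blast
qed

end

lemma dimension_bound:
  assumes "2 \<le> K" "real m \<le> real D - 224 * real K ^ 4 * ln (real K)"
  shows "m + K ^ 3 \<le> D"
proof -
  have "ln (1 / 2 :: real) \<le> 1 / 2 - 1"
    by (rule ln_le_minus_one) simp
  then have "1 / 2 \<le> ln (2 :: real)"
    by (simp add: ln_div)
  also have "\<dots> \<le> ln (real K)"
    using assms(1) by simp
  finally have "2 * (1 / 2) \<le> 224 * real K * ln (real K)"
    using assms(1) by (intro mult_mono) auto
  then have "real K ^ 3 * 1 \<le> real K ^ 3 * (224 * real K * ln (real K))"
    by (intro mult_left_mono) auto
  then have "real K ^ 3 \<le> 224 * real K ^ 4 * ln (real K)"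
    by (simp add: power_numeral_reduce algebra_simps)
  with assms(2) have "real (m + K ^ 3) \<le> real D"
    by simp
  then show ?thesis
    by linarith
qed

lemma vnorm_diff_le_of_lipnormV_le:
  assumes "u \<in> LipV D X" "lipnormV D X u \<le> C * n" "0 \<le> n" "n \<le> 1" "x \<in> X" "y \<in> X"
  shows "vnorm D (\<lambda>i. u x i - u y i) \<le> max C 0 * dist x y"
proof -
  have "C * n \<le> max C 0"
    using assms(3,4) by (cases "0 \<le> C") (auto intro: mult_left_le order_trans[OF mult_nonpos_nonneg])
  then have "lipnormV D X u \<le> max C 0"
    using assms(2) by linarith
  moreover have "lipschitzV D X u"
    using assms(1) by (simp add: LipV_def)
  ultimately show ?thesis
    using vnorm_diff_le_lipnormV[of D X u x y] mult_right_mono[of _ _ "dist x y"] assms(5,6)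
    by (meson order_trans zero_le_dist)
qed

theorem theorem4p5:
  fixes K m :: nat
    and C1 C2 C3 C4 :: real
    and Cinv Cabs Capp :: "real \<Rightarrow> real"
  assumes "K \<ge> 2"
  shows "\<exists>C::real. \<forall>(X::'a::metric_space set) D
            (F1::('a \<Rightarrow> real) set) N1 (F::('a \<Rightarrow> nat \<Rightarrow> real) set) N
            (v::nat \<Rightarrow> 'a \<Rightarrow> nat \<Rightarrow> real).
     doubling X K \<longrightarrow>
     F1 \<subseteq> LipR X \<longrightarrow> F \<subseteq> LipV D X \<longrightarrow>
     normed_fs_R F1 N1 \<longrightarrow> normed_fs_V F N \<longrightarrow>
     (\<forall>f\<in>F1. lipnormR X f \<le> C1 * N1 f) \<longrightarrow>
     (\<forall>u\<in>F. lipnormV D X u \<le> C2 * N u) \<longrightarrow>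
     (\<forall>f\<in>F1. \<forall>u\<in>F. (\<lambda>x i. f x * u x i) \<in> F \<and>
                      N (\<lambda>x i. f x * u x i) \<le> C3 * N1 f * N u) \<longrightarrow>
     (\<forall>u\<in>F. \<forall>w\<in>F. (\<lambda>x. vinner D (u x) (w x)) \<in> F1 \<and>
                      N1 (\<lambda>x. vinner D (u x) (w x)) \<le> C4 * N u * N w) \<longrightarrow>
     (\<forall>f\<in>F1. \<forall>c>0. (\<forall>x\<in>X. f x \<ge> c) \<longrightarrow>
                      (\<lambda>x. 1 / f x) \<in> F1 \<and> N1 (\<lambda>x. 1 / f x) \<le> Cinv c * N1 f) \<longrightarrow>
     (\<forall>u\<in>F. \<forall>c>0. (\<forall>x\<in>X. vnorm D (u x) \<ge> c) \<longrightarrow>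
                      (\<lambda>x. vnorm D (u x)) \<in> F1 \<and> N1 (\<lambda>x. vnorm D (u x)) \<le> Cabs c * N u) \<longrightarrow>
     (\<forall>\<delta>>0. \<forall>w. (\<forall>x\<in>X. w x \<in> RD D) \<longrightarrow> lipschitzV D X w \<longrightarrow> lipnormV D X w \<le> 1 \<longrightarrow>
        (\<exists>u\<in>F. (\<exists>\<epsilon><\<delta>. \<forall>x\<in>X. vnorm D (\<lambda>i. u x i - w x i) \<le> \<epsilon>) \<and>
                (boundedV D X w \<longrightarrow> N u \<le> Capp \<delta> * (linfV D X w + lipnormV D X w)))) \<longrightarrow>
     1 \<le> m \<longrightarrow> real m \<le> real D - 224 * real K ^ 4 * ln (real K) \<longrightarrow>
     (\<forall>i\<in>{1..m}. v i \<in> F \<and> N (v i) \<le> 1) \<longrightarrow>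
     (\<forall>p\<in>X. \<forall>i\<in>{1..m}. \<forall>j\<in>{1..m}. vinner D (v i p) (v j p) = (if i = j then 1 else 0)) \<longrightarrow>
     (\<exists>u\<in>F. N u \<le> C \<and>
        (\<forall>p\<in>X. vnorm D (u p) = 1 \<and> (\<forall>i\<in>{1..m}. vinner D (v i p) (u p) = 0)))"
  apply (intro exI[of _ "extension_bound K m (max C2 0) C3 C4 Cinv Cabs Capp"] allI impI)
  subgoal premises hyps for X D F1 N1 F N v
  proof -
    interpret frame_function_spaces X D F1 N1 F N C3 C4 Cinv Cabs Capp
      by (intro frame_function_spaces.intro hyps(4,5,8-12))
    have frame: "v k \<in> F \<and> N (v k) \<le> 1" if "k \<in> {1..m}" for k
      using hyps(15) that by blast
    have "vnorm D (\<lambda>i. v k x i - v k y i) \<le> max C2 0 * dist x y"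
      if "k \<in> {1..m}" "x \<in> X" "y \<in> X" for k x y
      using frame[OF that(1)] hyps(3,7) N_nonneg that(2,3)
      by (intro vnorm_diff_le_of_lipnormV_le[of "v k" D X C2 "N (v k)"]) auto
    then show ?thesis
      using unit_orthogonal_extension[OF hyps(1) dimension_bound[OF assms hyps(14)] _ frame, of "max C2 0"]
        hyps(16) by auto
  qed
  done

end
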